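(* Let $q$ be a prime power, $n\ge k\ge d\ge0$ integers, and $V_1,\dots,V_\ell$ subspaces of $\mathbb{F}_q^n$, each of dimension at most $k$. The following are equivalent: (1) there is a generic kernel pattern $(T_1,\dots,T_k)$ consisting solely of copies of $V_1,\dots,V_\ell$ and an additional $d$ copies of $\{0\}$; (2) there exist integers $\delta_1,\dots,\delta_\ell\ge0$ with $\sum_{i=1}^\ell\delta_i=k-d$ such that $\dim\big(\bigcap_{i\in\Omega}V_i\big)\le k-\sum_{i\in\Omega}\delta_i$ for every nonempty $\Omega\subseteq[\ell]$; (3) for every partition $P_1\sqcup\cdots\sqcup P_s=[\ell]$ into nonempty parts, $\sum_{i=1}^s\dim\big(\bigcap_{j\in P_i}V_j\big)\le(s-1)k+d$.
   Context: A generic kernel pattern is a $k$-tuple $(T_1,\dots,T_k)$ of subspaces of $\mathbb{F}_q^n$ with $\dim(\bigcap_{i\in\Omega}T_i)\le k-|\Omega|$ for all nonempty $\Omega\subseteq[k]$. *)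

theory Defs
  imports "HOL-Analysis.Analysis" "HOL-Library.Disjoint_Sets"
begin

text \<open>Vectors of F^n are modelled as 'a ^ 'n with 'a a finite field and CARD('n) = n.
  A k-tuple (T_1,...,T_k) is a function T indexed by {..<k}.\<close>

definition generic_kernel_pattern :: "nat \<Rightarrow> (nat \<Rightarrow> ('a::field ^ 'n) set) \<Rightarrow> bool" where
  "generic_kernel_pattern k T \<longleftrightarrow>
     (\<forall>i<k. vec.subspace (T i)) \<and>
     (\<forall>\<Omega>. \<Omega> \<noteq> {} \<and> \<Omega> \<subseteq> {..<k} \<longrightarrow>
        vec.dim (\<Inter>i\<in>\<Omega>. T i) \<le> k - card \<Omega>)"

definition copies_pattern ::
  "nat \<Rightarrow> nat \<Rightarrow> (nat \<Rightarrow> ('a::field ^ 'n) set) \<Rightarrow> nat \<Rightarrow> (nat \<Rightarrow> ('a ^ 'n) set) \<Rightarrow> bool" where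
  "copies_pattern k d V l T \<longleftrightarrow>
     (\<exists>Z \<sigma>. Z \<subseteq> {..<k} \<and> card Z = d \<and>
        (\<forall>j\<in>Z. T j = {0}) \<and>
        (\<forall>j\<in>{..<k} - Z. \<sigma> j < l \<and> T j = V (\<sigma> j)))"

end

theory Submission
  imports Defs
begin

(* Let \<delta>_i count the copies of V_i in a pattern. Restricted to the copies, the defining inequalities
  of a generic kernel pattern become exactly (2), and conversely any \<delta> satisfying (2) is realised
  by placing \<delta>_i copies of each V_i after the d zero spaces. Summing (2) over the blocks of a
  partition gives (3).
  For (3) \<Longrightarrow> (2), raise \<delta> one unit at a time. The function g(\<Omega>) = dim (\<Inter>i\<in>\<Omega>. V i) is
  supermodular on intersecting pairs, so two intersecting tight sets (those where (2) is an
  equality) have a tight union. A unit can be added at any index outside all tight sets; if there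
  is none, the maximal tight sets partition the index set, and adding up their equalities
  contradicts (3) while \<Sum>\<delta> < k - d. *)

definition intersecting_supermodular :: "'i set \<Rightarrow> ('i set \<Rightarrow> nat) \<Rightarrow> bool" where
  "intersecting_supermodular I g \<longleftrightarrow>
     (\<forall>A B. A \<subseteq> I \<longrightarrow> B \<subseteq> I \<longrightarrow> A \<inter> B \<noteq> {} \<longrightarrow> g A + g B \<le> g (A \<union> B) + g (A \<inter> B))"

(* Condition (2), written additively to avoid truncated subtraction on nat. *)
definition admissible :: "nat \<Rightarrow> ('i set \<Rightarrow> nat) \<Rightarrow> 'i set \<Rightarrow> ('i \<Rightarrow> nat) \<Rightarrow> bool" where
  "admissible k g I \<delta> \<longleftrightarrow> (\<forall>\<Omega>. \<Omega> \<noteq> {} \<longrightarrow> \<Omega> \<subseteq> I \<longrightarrow> g \<Omega> + sum \<delta> \<Omega> \<le> k)"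

definition tight :: "nat \<Rightarrow> ('i set \<Rightarrow> nat) \<Rightarrow> 'i set \<Rightarrow> ('i \<Rightarrow> nat) \<Rightarrow> 'i set \<Rightarrow> bool" where
  "tight k g I \<delta> \<Omega> \<longleftrightarrow> \<Omega> \<noteq> {} \<and> \<Omega> \<subseteq> I \<and> g \<Omega> + sum \<delta> \<Omega> = k"

lemma intersecting_supermodularD:
  "intersecting_supermodular I g \<Longrightarrow> A \<subseteq> I \<Longrightarrow> B \<subseteq> I \<Longrightarrow> A \<inter> B \<noteq> {} \<Longrightarrow>
    g A + g B \<le> g (A \<union> B) + g (A \<inter> B)"
  by (simp add: intersecting_supermodular_def)

lemma admissibleD:
  "admissible k g I \<delta> \<Longrightarrow> \<Omega> \<noteq> {} \<Longrightarrow> \<Omega> \<subseteq> I \<Longrightarrow> g \<Omega> + sum \<delta> \<Omega> \<le> k"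
  by (simp add: admissible_def)

lemma sum_sum_partition:
  assumes "partition_on I P" "finite I"
  shows "(\<Sum>B\<in>P. sum f B) = sum f I"
proof -
  have "\<forall>B\<in>P. finite B" "disjoint P"
    using assms by (auto simp: partition_on_def intro: rev_finite_subset)
  then have "sum f (\<Union>P) = (sum \<circ> sum) f P"
    by (rule sum.Union_disjoint_sets)
  then show ?thesis
    using partition_onD1[OF assms(1)] by simp
qed

lemma admissible_partition_sum_le:
  assumes "admissible k g I \<delta>" "partition_on I P" "finite I"
  shows "(\<Sum>B\<in>P. g B) + sum \<delta> I \<le> card P * k"
proof -
  have "(\<Sum>B\<in>P. g B) + sum \<delta> I = (\<Sum>B\<in>P. g B + sum \<delta> B)"
    by (simp add: sum.distrib sum_sum_partition[OF assms(2,3)])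
  also have "\<dots> \<le> (\<Sum>B\<in>P. k)"
  proof (rule sum_mono)
    fix B assume "B \<in> P"
    then have "B \<noteq> {}" "B \<subseteq> I"
      using partition_onD1[OF assms(2)] partition_onD3[OF assms(2)] by blast+
    then show "g B + sum \<delta> B \<le> k"
      by (rule admissibleD[OF assms(1)])
  qed
  finally show ?thesis by simp
qed

lemma tight_partition_sum_eq:
  assumes "\<forall>B\<in>P. tight k g I \<delta> B" "partition_on I P" "finite I"
  shows "(\<Sum>B\<in>P. g B) + sum \<delta> I = card P * k"
proof -
  have "(\<Sum>B\<in>P. g B) + sum \<delta> I = (\<Sum>B\<in>P. g B + sum \<delta> B)"
    by (simp add: sum.distrib sum_sum_partition[OF assms(2,3)])
  also have "\<dots> = (\<Sum>B\<in>P. k)"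
    using assms(1) by (intro sum.cong) (auto simp: tight_def)
  finally show ?thesis by simp
qed

lemma tight_Un:
  assumes "intersecting_supermodular I g" "admissible k g I \<delta>" "finite I"
    and "tight k g I \<delta> A" "tight k g I \<delta> B" "A \<inter> B \<noteq> {}"
  shows "tight k g I \<delta> (A \<union> B)"
proof -
  have "A \<subseteq> I" "B \<subseteq> I"
    using assms(4,5) by (auto simp: tight_def)
  then have "finite A" "finite B" "A \<union> B \<subseteq> I" "A \<inter> B \<subseteq> I"
    using finite_subset[OF _ assms(3)] by blast+
  have "A \<union> B \<noteq> {}"
    using assms(6) by blast
  have "sum \<delta> (A \<union> B) + sum \<delta> (A \<inter> B) = sum \<delta> A + sum \<delta> B"
    using \<open>finite A\<close> \<open>finite B\<close> by (rule sum.union_inter)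
  moreover have "g A + g B \<le> g (A \<union> B) + g (A \<inter> B)"
    using \<open>A \<subseteq> I\<close> \<open>B \<subseteq> I\<close> by (rule intersecting_supermodularD[OF assms(1) _ _ assms(6)])
  moreover have "g (A \<union> B) + sum \<delta> (A \<union> B) \<le> k"
    using \<open>A \<union> B \<noteq> {}\<close> \<open>A \<union> B \<subseteq> I\<close> by (rule admissibleD[OF assms(2)])
  moreover have "g (A \<inter> B) + sum \<delta> (A \<inter> B) \<le> k"
    using assms(6) \<open>A \<inter> B \<subseteq> I\<close> by (rule admissibleD[OF assms(2)])
  ultimately have "g (A \<union> B) + sum \<delta> (A \<union> B) = k"
    using assms(4,5) unfolding tight_def by linarith
  then show ?thesis
    using \<open>A \<union> B \<noteq> {}\<close> \<open>A \<union> B \<subseteq> I\<close> by (simp add: tight_def)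
qed

lemma maximal_tight_sets_partition:
  assumes "intersecting_supermodular I g" "admissible k g I \<delta>" "finite I"
    and covered: "\<forall>i\<in>I. \<exists>\<Omega>. tight k g I \<delta> \<Omega> \<and> i \<in> \<Omega>"
  obtains P where "partition_on I P" "\<forall>B\<in>P. tight k g I \<delta> B"
proof -
  let ?tight = "{\<Omega>. tight k g I \<delta> \<Omega>}"
  define P where "P = {B \<in> ?tight. \<forall>C \<in> ?tight. B \<subseteq> C \<longrightarrow> C = B}"
  have "finite ?tight"
    using finite_subset[of ?tight "Pow I"] assms(3) by (auto simp: tight_def)
  have maximal: "\<exists>B\<in>P. \<Omega> \<subseteq> B" if "tight k g I \<delta> \<Omega>" for \<Omega>
    using finite_has_maximal2[OF \<open>finite ?tight\<close>, of \<Omega>] that unfolding P_def by blast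
  have tight: "\<forall>B\<in>P. tight k g I \<delta> B"
    unfolding P_def by blast
  have "partition_on I P"
  proof (rule partition_onI)
    show "\<Union>P = I"
    proof
      show "\<Union>P \<subseteq> I"
        using tight by (auto simp: tight_def)
      show "I \<subseteq> \<Union>P"
        using covered maximal by blast
    qed
    show "disjnt B C" if "B \<in> P" "C \<in> P" "B \<noteq> C" for B C
    proof (rule ccontr)
      assume "\<not> disjnt B C"
      then have "tight k g I \<delta> (B \<union> C)"
        using tight_Un[OF assms(1-3)] tight that by (simp add: disjnt_def)
      moreover have "\<forall>D\<in>?tight. B \<subseteq> D \<longrightarrow> D = B" "\<forall>D\<in>?tight. C \<subseteq> D \<longrightarrow> D = C"
        using that by (simp_all add: P_def)
      ultimately show False
        using \<open>B \<noteq> C\<close> by (metis Un_upper1 Un_upper2 mem_Collect_eq)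
    qed
    show "{} \<notin> P"
      using tight by (auto simp: tight_def)
  qed
  then show ?thesis
    using that tight by blast
qed

lemma admissible_increment:
  assumes "admissible k g I \<delta>" "finite I" "\<forall>\<Omega>. tight k g I \<delta> \<Omega> \<longrightarrow> i \<notin> \<Omega>"
  shows "admissible k g I (\<delta>(i := Suc (\<delta> i)))"
  unfolding admissible_def
proof (intro allI impI)
  fix \<Omega> assume "\<Omega> \<noteq> {}" "\<Omega> \<subseteq> I"
  then have "finite \<Omega>" "g \<Omega> + sum \<delta> \<Omega> \<le> k"
    using admissibleD[OF assms(1)] finite_subset[OF _ assms(2)] by blast+
  show "g \<Omega> + sum (\<delta>(i := Suc (\<delta> i))) \<Omega> \<le> k"
  proof (cases "i \<in> \<Omega>")
    case True
    then have "g \<Omega> + sum \<delta> \<Omega> \<noteq> k"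
      using assms(3) \<open>\<Omega> \<noteq> {}\<close> \<open>\<Omega> \<subseteq> I\<close> by (auto simp: tight_def)
    then show ?thesis
      using True \<open>finite \<Omega>\<close> \<open>g \<Omega> + sum \<delta> \<Omega> \<le> k\<close> by (simp add: sum.remove)
  next
    case False
    then have "sum (\<delta>(i := Suc (\<delta> i))) \<Omega> = sum \<delta> \<Omega>"
      by (intro sum.cong) auto
    then show ?thesis
      using \<open>g \<Omega> + sum \<delta> \<Omega> \<le> k\<close> by simp
  qed
qed

lemma partition_bound_imp_admissible:
  assumes "intersecting_supermodular I g" "finite I"
    and bounded: "\<forall>\<Omega>. \<Omega> \<noteq> {} \<longrightarrow> \<Omega> \<subseteq> I \<longrightarrow> g \<Omega> \<le> k"
    and partition_bound: "\<forall>P. partition_on I P \<longrightarrow> (\<Sum>B\<in>P. g B) + k \<le> card P * k + d"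
    and "m \<le> k - d"
  shows "\<exists>\<delta>. sum \<delta> I = m \<and> admissible k g I \<delta>"
  using \<open>m \<le> k - d\<close>
proof (induction m)
  case 0
  have "admissible k g I (\<lambda>_. 0)"
    using bounded by (simp add: admissible_def)
  then show ?case
    by (intro exI[of _ "\<lambda>_. 0"]) simp
next
  case (Suc m)
  then obtain \<delta> where "sum \<delta> I = m" and admissible: "admissible k g I \<delta>"
    by auto
  show ?case
  proof (cases "\<exists>i\<in>I. \<forall>\<Omega>. tight k g I \<delta> \<Omega> \<longrightarrow> i \<notin> \<Omega>")
    case True
    then obtain i where "i \<in> I" "\<forall>\<Omega>. tight k g I \<delta> \<Omega> \<longrightarrow> i \<notin> \<Omega>"
      by blast
    moreover have "sum (\<delta>(i := Suc (\<delta> i))) I = Suc m"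
      using \<open>i \<in> I\<close> \<open>finite I\<close> \<open>sum \<delta> I = m\<close> by (simp add: sum.remove)
    ultimately show ?thesis
      using admissible_increment[OF admissible \<open>finite I\<close>] by blast
  next
    case False
    then obtain P where "partition_on I P" "\<forall>B\<in>P. tight k g I \<delta> B"
      using maximal_tight_sets_partition[OF assms(1) admissible \<open>finite I\<close>] by blast
    then have "(\<Sum>B\<in>P. g B) + m = card P * k"
      using tight_partition_sum_eq \<open>finite I\<close> \<open>sum \<delta> I = m\<close> by metis
    moreover have "(\<Sum>B\<in>P. g B) + k \<le> card P * k + d"
      using partition_bound \<open>partition_on I P\<close> by blast
    ultimately show ?thesis
      using \<open>Suc m \<le> k - d\<close> by linarith
  qed
qed

lemma admissible_iff_partition_bound:
  assumes "intersecting_supermodular I g" "finite I" "d \<le> k"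
    and "\<forall>\<Omega>. \<Omega> \<noteq> {} \<longrightarrow> \<Omega> \<subseteq> I \<longrightarrow> g \<Omega> \<le> k"
  shows "(\<exists>\<delta>. sum \<delta> I = k - d \<and> admissible k g I \<delta>) \<longleftrightarrow>
         (\<forall>P. partition_on I P \<longrightarrow> (\<Sum>B\<in>P. g B) + k \<le> card P * k + d)"
proof (intro iffI allI impI)
  fix P assume "\<exists>\<delta>. sum \<delta> I = k - d \<and> admissible k g I \<delta>" "partition_on I P"
  then obtain \<delta> where "sum \<delta> I = k - d" "(\<Sum>B\<in>P. g B) + sum \<delta> I \<le> card P * k"
    using admissible_partition_sum_le \<open>finite I\<close> by blast
  then show "(\<Sum>B\<in>P. g B) + k \<le> card P * k + d"
    using \<open>d \<le> k\<close> by linarith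
next
  assume "\<forall>P. partition_on I P \<longrightarrow> (\<Sum>B\<in>P. g B) + k \<le> card P * k + d"
  then show "\<exists>\<delta>. sum \<delta> I = k - d \<and> admissible k g I \<delta>"
    using partition_bound_imp_admissible[OF assms(1,2,4)] by blast
qed

lemma (in finite_dimensional_vector_space) dim_Inter_supermodular:
  assumes "\<forall>i\<in>A \<union> B. subspace (V i)"
  shows "dim (\<Inter>i\<in>A. V i) + dim (\<Inter>i\<in>B. V i) \<le> dim (\<Inter>i\<in>A \<union> B. V i) + dim (\<Inter>i\<in>A \<inter> B. V i)"
proof -
  let ?X = "\<Inter>i\<in>A. V i" and ?Y = "\<Inter>i\<in>B. V i"
  let ?S = "{x + y |x y. x \<in> ?X \<and> y \<in> ?Y}"
  have "subspace ?X" "subspace ?Y"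
    using assms by (simp_all add: subspace_Inter)
  then have "dim ?S + dim (?X \<inter> ?Y) = dim ?X + dim ?Y"
    by (rule dim_sums_Int)
  moreover have "dim ?S \<le> dim (\<Inter>i\<in>A \<inter> B. V i)"
    using assms by (intro dim_subset) (auto intro: subspace_add)
  moreover have "dim (?X \<inter> ?Y) = dim (\<Inter>i\<in>A \<union> B. V i)"
    by (simp only: INT_Un)
  ultimately show ?thesis
    by linarith
qed

lemma (in finite_dimensional_vector_space) intersecting_supermodular_dim_Inter:
  "\<forall>i\<in>I. subspace (V i) \<Longrightarrow> intersecting_supermodular I (\<lambda>\<Omega>. dim (\<Inter>i\<in>\<Omega>. V i))"
  unfolding intersecting_supermodular_def by (auto intro!: dim_Inter_supermodular)

lemma (in finite_dimensional_vector_space) dim_Inter_le: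
  assumes "\<forall>i\<in>I. dim (V i) \<le> k" "\<Omega> \<noteq> {}" "\<Omega> \<subseteq> I"
  shows "dim (\<Inter>i\<in>\<Omega>. V i) \<le> k"
proof -
  obtain i where "i \<in> \<Omega>"
    using assms(2) by blast
  then have "dim (\<Inter>i\<in>\<Omega>. V i) \<le> dim (V i)"
    by (intro dim_subset) blast
  then show ?thesis
    using assms(1,3) \<open>i \<in> \<Omega>\<close> by fastforce
qed

lemma sum_card_fibres:
  assumes "finite S" "finite J"
  shows "(\<Sum>i\<in>J. card {j\<in>S. \<sigma> j = i}) = card {j\<in>S. \<sigma> j \<in> J}"
proof -
  have "card {j\<in>S. \<sigma> j \<in> J} = card (\<Union>i\<in>J. {j\<in>S. \<sigma> j = i})"
    by (rule arg_cong[where f = card]) blast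
  also have "\<dots> = (\<Sum>i\<in>J. card {j\<in>S. \<sigma> j = i})"
    using assms by (intro card_UN_disjoint) auto
  finally show ?thesis
    by simp
qed

lemma map_with_fibre_cards:
  assumes "finite I" "finite S" "card S = sum \<delta> I"
  obtains \<sigma> where "\<forall>j\<in>S. \<sigma> j \<in> I" "\<forall>i\<in>I. card {j\<in>S. \<sigma> j = i} = \<delta> i"
proof -
  obtain h where h: "bij_betw h S (SIGMA i:I. {..<\<delta> i})"
    using finite_same_card_bij[of S "SIGMA i:I. {..<\<delta> i}"] assms by auto
  show ?thesis
  proof
    show "\<forall>j\<in>S. fst (h j) \<in> I"
      by (metis SigmaD1 prod.collapse bij_betw_apply[OF h])
    show "\<forall>i\<in>I. card {j\<in>S. fst (h j) = i} = \<delta> i"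
    proof
      fix i assume "i \<in> I"
      have "h ` {j\<in>S. fst (h j) = i} = {p \<in> h ` S. fst p = i}"
        by blast
      also have "\<dots> = {i} \<times> {..<\<delta> i}"
        using h \<open>i \<in> I\<close> by (auto simp: bij_betw_def)
      finally have "h ` {j\<in>S. fst (h j) = i} = {i} \<times> {..<\<delta> i}" .
      moreover have "inj_on h {j\<in>S. fst (h j) = i}"
        using h by (auto simp: bij_betw_def intro: inj_on_subset)
      ultimately show "card {j\<in>S. fst (h j) = i} = \<delta> i"
        by (metis card_image card_cartesian_product_singleton card_lessThan)
    qed
  qed
qed

lemma generic_kernel_patternD:
  "generic_kernel_pattern k T \<Longrightarrow> \<Omega> \<noteq> {} \<Longrightarrow> \<Omega> \<subseteq> {..<k} \<Longrightarrow> vec.dim (\<Inter>i\<in>\<Omega>. T i) \<le> k - card \<Omega>"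
  by (simp add: generic_kernel_pattern_def)

lemma copies_pattern_imp_admissible:
  fixes V T :: "nat \<Rightarrow> ('a::field ^ 'n) set"
  assumes "generic_kernel_pattern k T" "copies_pattern k d V l T" "\<forall>i<l. vec.dim (V i) \<le> k"
  shows "\<exists>\<delta>. sum \<delta> {..<l} = k - d \<and> admissible k (\<lambda>\<Omega>. vec.dim (\<Inter>i\<in>\<Omega>. V i)) {..<l} \<delta>"
proof -
  obtain Z \<sigma> where Z: "Z \<subseteq> {..<k}" "card Z = d"
    and \<sigma>: "\<forall>j\<in>{..<k} - Z. \<sigma> j < l \<and> T j = V (\<sigma> j)"
    using assms(2) unfolding copies_pattern_def by (elim exE conjE)
  define S where "S = {..<k} - Z"
  define \<delta> where "\<delta> i = card {j\<in>S. \<sigma> j = i}" for i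
  have copies: "sum \<delta> J = card {j\<in>S. \<sigma> j \<in> J}" if "finite J" for J
    unfolding \<delta>_def using sum_card_fibres[of S J] that by (simp add: S_def)
  have "card S = k - d"
    using card_Diff_subset[OF finite_subset[OF Z(1)] Z(1)] Z(2) by (simp add: S_def)
  moreover have "{j\<in>S. \<sigma> j \<in> {..<l}} = S"
    using \<sigma> by (auto simp: S_def)
  ultimately have "sum \<delta> {..<l} = k - d"
    using copies[of "{..<l}"] by simp
  moreover have "admissible k (\<lambda>\<Omega>. vec.dim (\<Inter>i\<in>\<Omega>. V i)) {..<l} \<delta>"
    unfolding admissible_def
  proof (intro allI impI)
    fix \<Omega> :: "nat set" assume "\<Omega> \<noteq> {}" "\<Omega> \<subseteq> {..<l}"
    define J where "J = {j\<in>S. \<sigma> j \<in> \<Omega>}"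
    have "sum \<delta> \<Omega> = card J" "J \<subseteq> {..<k}"
      using copies[of \<Omega>] finite_subset[OF \<open>\<Omega> \<subseteq> {..<l}\<close>] by (auto simp: J_def S_def)
    show "vec.dim (\<Inter>i\<in>\<Omega>. V i) + sum \<delta> \<Omega> \<le> k"
    proof (cases "J = {}")
      case True
      then show ?thesis
        using vec.dim_Inter_le[of "{..<l}" V k \<Omega>] assms(3) \<open>\<Omega> \<noteq> {}\<close> \<open>\<Omega> \<subseteq> {..<l}\<close> \<open>sum \<delta> \<Omega> = card J\<close>
        by simp
    next
      case False
      have "(\<Inter>i\<in>\<Omega>. V i) \<subseteq> (\<Inter>j\<in>J. T j)"
        using \<sigma> by (auto simp: J_def S_def)
      then have "vec.dim (\<Inter>i\<in>\<Omega>. V i) \<le> vec.dim (\<Inter>j\<in>J. T j)"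
        by (rule vec.dim_subset)
      also have "\<dots> \<le> k - card J"
        using False \<open>J \<subseteq> {..<k}\<close> by (rule generic_kernel_patternD[OF assms(1)])
      finally show ?thesis
        using card_mono[OF _ \<open>J \<subseteq> {..<k}\<close>] \<open>sum \<delta> \<Omega> = card J\<close> by simp
    qed
  qed
  ultimately show ?thesis
    by blast
qed

lemma admissible_imp_copies_pattern:
  fixes V :: "nat \<Rightarrow> ('a::field ^ 'n) set"
  assumes "d \<le> k" "\<forall>i<l. vec.subspace (V i)"
    and "sum \<delta> {..<l} = k - d" "admissible k (\<lambda>\<Omega>. vec.dim (\<Inter>i\<in>\<Omega>. V i)) {..<l} \<delta>"
  shows "\<exists>T. generic_kernel_pattern k T \<and> copies_pattern k d V l T"
proof -
  obtain \<sigma> where \<sigma>: "\<forall>j\<in>{d..<k}. \<sigma> j \<in> {..<l}"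
    and fibres: "\<forall>i\<in>{..<l}. card {j\<in>{d..<k}. \<sigma> j = i} = \<delta> i"
    using map_with_fibre_cards[of "{..<l}" "{d..<k}" \<delta>] assms(3) by auto
  define T where "T j = (if j < d then {0} else V (\<sigma> j))" for j
  have "copies_pattern k d V l T"
    unfolding copies_pattern_def using \<sigma> \<open>d \<le> k\<close>
    by (intro exI[of _ "{..<d}"] exI[of _ \<sigma>]) (auto simp: T_def)
  moreover have "generic_kernel_pattern k T"
    unfolding generic_kernel_pattern_def
  proof (intro conjI allI impI)
    show "vec.subspace (T j)" if "j < k" for j
      using assms(2) \<sigma> that by (auto simp: T_def)
    fix \<Omega> assume \<Omega>: "\<Omega> \<noteq> {} \<and> \<Omega> \<subseteq> {..<k}"
    show "vec.dim (\<Inter>j\<in>\<Omega>. T j) \<le> k - card \<Omega>"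
    proof (cases "\<exists>j\<in>\<Omega>. j < d")
      case True
      then have "(\<Inter>j\<in>\<Omega>. T j) \<subseteq> {0}"
        by (auto simp: T_def)
      then have "vec.dim (\<Inter>j\<in>\<Omega>. T j) = 0"
        by simp
      then show ?thesis
        by linarith
    next
      case False
      then have "\<Omega> \<subseteq> {d..<k}"
        using \<Omega> by (auto simp: subset_iff not_less)
      let ?J = "\<sigma> ` \<Omega>"
      have "?J \<noteq> {}" "?J \<subseteq> {..<l}" "finite ?J"
        using \<Omega> \<sigma> \<open>\<Omega> \<subseteq> {d..<k}\<close> finite_subset[OF \<open>\<Omega> \<subseteq> {d..<k}\<close>] by auto
      have "(\<Inter>j\<in>\<Omega>. T j) = (\<Inter>i\<in>?J. V i)"
        using False by (auto simp: T_def)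
      moreover have "card \<Omega> \<le> card {j\<in>{d..<k}. \<sigma> j \<in> ?J}"
        using \<open>\<Omega> \<subseteq> {d..<k}\<close> by (intro card_mono) auto
      moreover have "card {j\<in>{d..<k}. \<sigma> j \<in> ?J} = sum \<delta> ?J"
        using sum_card_fibres[of "{d..<k}" ?J \<sigma>] fibres \<open>?J \<subseteq> {..<l}\<close> \<open>finite ?J\<close>
        by (simp add: subset_iff)
      moreover have "vec.dim (\<Inter>i\<in>?J. V i) + sum \<delta> ?J \<le> k"
        using admissibleD[OF assms(4) \<open>?J \<noteq> {}\<close> \<open>?J \<subseteq> {..<l}\<close>] .
      ultimately show ?thesis
        by simp
    qed
  qed
  ultimately show ?thesis
    by blast
qed

theorem mainTheorem16:
  fixes V :: "nat \<Rightarrow> ('a::field ^ 'n) set" and l k d :: nat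
  assumes "finite (UNIV :: 'a set)"
    and "k \<le> CARD('n)" and "d \<le> k"
    and "\<forall>i<l. vec.subspace (V i) \<and> vec.dim (V i) \<le> k"
  shows "((\<exists>T. generic_kernel_pattern k T \<and> copies_pattern k d V l T)
          \<longleftrightarrow>
          (\<exists>\<delta>::nat \<Rightarrow> nat. (\<Sum>i<l. \<delta> i) = k - d \<and>
             (\<forall>\<Omega>. \<Omega> \<noteq> {} \<and> \<Omega> \<subseteq> {..<l} \<longrightarrow>
                int (vec.dim (\<Inter>i\<in>\<Omega>. V i)) \<le> int k - int (\<Sum>i\<in>\<Omega>. \<delta> i))))
       \<and> ((\<exists>\<delta>::nat \<Rightarrow> nat. (\<Sum>i<l. \<delta> i) = k - d \<and>
             (\<forall>\<Omega>. \<Omega> \<noteq> {} \<and> \<Omega> \<subseteq> {..<l} \<longrightarrow>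
                int (vec.dim (\<Inter>i\<in>\<Omega>. V i)) \<le> int k - int (\<Sum>i\<in>\<Omega>. \<delta> i)))
          \<longleftrightarrow>
          (\<forall>P. partition_on {..<l} P \<longrightarrow>
             int (\<Sum>B\<in>P. vec.dim (\<Inter>j\<in>B. V j)) \<le> (int (card P) - 1) * int k + int d))"
proof -
  let ?g = "\<lambda>\<Omega>. vec.dim (\<Inter>i\<in>\<Omega>. V i)"
  have subspaces: "\<forall>i<l. vec.subspace (V i)" and dims: "\<forall>i<l. vec.dim (V i) \<le> k"
    using assms(4) by simp_all
  have supermodular: "intersecting_supermodular {..<l} ?g"
    using subspaces by (intro vec.intersecting_supermodular_dim_Inter) simp
  have bounded: "\<forall>\<Omega>. \<Omega> \<noteq> {} \<longrightarrow> \<Omega> \<subseteq> {..<l} \<longrightarrow> ?g \<Omega> \<le> k"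
    using dims vec.dim_Inter_le[of "{..<l}" V k] by simp
  have int_le_diff: "int a \<le> int k - int b \<longleftrightarrow> a + b \<le> k" for a b
    by linarith
  have admissible_int: "(\<forall>\<Omega>. \<Omega> \<noteq> {} \<and> \<Omega> \<subseteq> {..<l} \<longrightarrow> int (?g \<Omega>) \<le> int k - int (sum \<delta> \<Omega>))
      \<longleftrightarrow> admissible k ?g {..<l} \<delta>" for \<delta>
    unfolding admissible_def int_le_diff by blast
  have partition_int: "int a \<le> (int c - 1) * int k + int d \<longleftrightarrow> a + k \<le> c * k + d" for a c
    by (simp add: left_diff_distrib flip: of_nat_mult) linarith
  show ?thesis
    unfolding admissible_int partition_int
  proof (intro conjI)
    show "(\<exists>T. generic_kernel_pattern k T \<and> copies_pattern k d V l T) \<longleftrightarrow>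
        (\<exists>\<delta>. sum \<delta> {..<l} = k - d \<and> admissible k ?g {..<l} \<delta>)"
      using copies_pattern_imp_admissible[OF _ _ dims]
        admissible_imp_copies_pattern[OF assms(3) subspaces] by blast
    show "(\<exists>\<delta>. sum \<delta> {..<l} = k - d \<and> admissible k ?g {..<l} \<delta>) \<longleftrightarrow>
        (\<forall>P. partition_on {..<l} P \<longrightarrow> (\<Sum>B\<in>P. ?g B) + k \<le> card P * k + d)"
      by (rule admissible_iff_partition_bound[OF supermodular finite_lessThan assms(3) bounded])
  qed
qed

end
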